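(* Let $k\ge2$, $\lambda>0$, $\theta>1$ (i.e. $J<0$). Put $\theta_{\rm cr}=2\bigl(\frac{k+1}{k-1}\bigr)^2-1$. Then: (1) if $\theta\le\theta_{\rm cr}$, there is exactly one TISGM; (2) if $\theta>\theta_{\rm cr}$, the quadratic $2x^2+[4-(\theta-1)(k-1)]x+\theta+1=0$ has two distinct positive roots $x_1,x_2$, and the two numbers $\frac{2^kx_i}{(1+\theta)^{k+1}}\bigl(\frac{1+\theta+2x_i}{2(1+x_i)}\bigr)^k$, $i=1,2$, are distinct; denote them $\lambda_-<\lambda_+$. Then: (2a) if $\lambda\in(0,\lambda_-)\cup(\lambda_+,\infty)$ there is exactly one TISGM; (2b) if $\lambda\in\{\lambda_-,\lambda_+\}$ there are exactly two TISGMs; (2c) if $\lambda\in(\lambda_-,\lambda_+)$ there are exactly three TISGMs.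
   Context: The SCWR model on the Cayley tree $\mathbb{T}^k$ (each vertex has $k$ direct successors) has spins in $\{-1,0,1\}$, activity $\lambda>0$ and interaction parameter $\theta=e^{-J\beta}>0$ ($J<0$ antiferromagnetic, i.e. $\theta>1$; $J>0$ ferromagnetic, i.e. $0<\theta<1$). Translation-invariant splitting Gibbs measures (TISGMs) are in one-to-one correspondence with the solutions $(x,y)\in(0,\infty)^2$ of the system $x=\lambda\bigl(\frac{1+x+\theta y}{1+x+y}\bigr)^k$, $y=\lambda\bigl(\frac{1+\theta x+y}{1+x+y}\bigr)^k$; "the number of TISGMs" means the number of such positive solutions. *)

theory Defs
  imports "HOL-Analysis.Analysis"
begin

text \<open>Positive solutions (x,y) of the TISGM system of the SCWR model on the Cayley tree
  of order k with activity lam and interaction parameter theta.  These are in one-to-one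
  correspondence with the translation-invariant splitting Gibbs measures.\<close>
definition scwr_tisgm :: "nat \<Rightarrow> real \<Rightarrow> real \<Rightarrow> (real \<times> real) set" where
  "scwr_tisgm k lam theta = {(x, y). x > 0 \<and> y > 0 \<and>
      x = lam * ((1 + x + theta * y) / (1 + x + y)) ^ k \<and>
      y = lam * ((1 + theta * x + y) / (1 + x + y)) ^ k}"

definition num_tisgm :: "nat \<Rightarrow> real \<Rightarrow> real \<Rightarrow> nat" where
  "num_tisgm k lam theta = card (scwr_tisgm k lam theta)"

definition theta_cr :: "nat \<Rightarrow> real" where
  "theta_cr k = 2 * ((real k + 1) / (real k - 1)) ^ 2 - 1"

definition lam_crit :: "nat \<Rightarrow> real \<Rightarrow> real \<Rightarrow> real" where
  "lam_crit k theta x = 2 ^ k * x / (1 + theta) ^ (k + 1) *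
      ((1 + theta + 2 * x) / (2 * (1 + x))) ^ k"

end

theory Submission
  imports Defs
begin

text \<open>For \<open>\<theta> > 1\<close> every solution of the system is symmetric, \<open>x = y = z\<close>, and on the
  diagonal \<open>z\<close> is a solution exactly when \<open>\<lambda> = lam_crit k \<theta> ((1 + \<theta>) z)\<close>. So the TISGMs
  are counted by the positive solutions of \<open>lam_crit k \<theta> x = \<lambda>\<close>. The derivative of
  \<open>lam_crit k \<theta>\<close> on \<open>[0, \<infinity>)\<close> has the sign of the quadratic of the theorem, whose
  discriminant is positive exactly when \<open>\<theta> > \<theta>\<^sub>c\<^sub>r\<close>. Below that threshold \<open>lam_crit k \<theta>\<close> increases
  from \<open>0\<close> to \<open>\<infinity>\<close>, giving one solution; above it, it increases up to the smaller root
  \<open>x\<^sub>1\<close>, decreases up to \<open>x\<^sub>2\<close> and increases again, so \<open>\<lambda>\<^sub>+ = lam_crit k \<theta> x\<^sub>1\<close>,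
  \<open>\<lambda>\<^sub>- = lam_crit k \<theta> x\<^sub>2\<close>, and the solutions are counted on the three monotone pieces.\<close>

section \<open>Level sets of piecewise strictly monotone functions\<close>

lemma strict_mono_on_Icc_if_deriv_pos:
  fixes f :: "real \<Rightarrow> real"
  assumes "continuous_on {u..v} f"
    and "\<And>x. u < x \<Longrightarrow> x < v \<Longrightarrow> x \<noteq> c \<Longrightarrow> \<exists>d>0. (f has_real_derivative d) (at x)"
  shows "strict_mono_on {u..v} f"
proof (rule strict_mono_onI)
  have less: "f x < f y" if "u \<le> x" "x < y" "y \<le> v" "c \<notin> {x<..<y}" for x y
  proof (rule DERIV_pos_imp_increasing_open[OF \<open>x < y\<close>])
    show "continuous_on {x..y} f"
      by (rule continuous_on_subset[OF assms(1)]) (use that in auto)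
    show "\<exists>d. (f has_real_derivative d) (at z) \<and> 0 < d" if "x < z" "z < y" for z
      using assms(2)[of z] that \<open>u \<le> x\<close> \<open>y \<le> v\<close> \<open>c \<notin> {x<..<y}\<close> by auto
  qed
  fix x y assume "x \<in> {u..v}" "y \<in> {u..v}" "x < y"
  then show "f x < f y"
  proof (cases "c \<in> {x<..<y}")
    case True
    then have "f x < f c" "f c < f y"
      using \<open>x \<in> {u..v}\<close> \<open>y \<in> {u..v}\<close> by (auto intro!: less)
    then show ?thesis by simp
  qed (auto intro: less)
qed

lemma strict_mono_on_Ici_if_deriv_pos:
  fixes f :: "real \<Rightarrow> real"
  assumes "continuous_on {u..} f"
    and "\<And>x. u < x \<Longrightarrow> x \<noteq> c \<Longrightarrow> \<exists>d>0. (f has_real_derivative d) (at x)"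
  shows "strict_mono_on {u..} f"
proof (rule strict_mono_onI)
  fix x y assume "x \<in> {u..}" "y \<in> {u..}" "x < y"
  moreover have "strict_mono_on {u..y} f"
    using assms by (intro strict_mono_on_Icc_if_deriv_pos[where c = c]) (auto intro: continuous_on_subset)
  ultimately show "f x < f y" by (auto intro: strict_mono_onD)
qed

lemma card_level_set_Ioc:
  fixes g :: "real \<Rightarrow> real"
  assumes "u \<le> v" "continuous_on {u..v} g" "strict_mono_on {u..v} g"
  shows "finite {z. u < z \<and> z \<le> v \<and> g z = c}"
    and "card {z. u < z \<and> z \<le> v \<and> g z = c} = (if g u < c \<and> c \<le> g v then 1 else 0)"
proof -
  define S where "S = {z. u < z \<and> z \<le> v \<and> g z = c}"
  have "\<exists>z. S = {z}" if c: "g u < c" "c \<le> g v"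
  proof -
    obtain z where z: "u \<le> z" "z \<le> v" "g z = c"
      using IVT'[of g u c v] assms(1,2) c by auto
    with c have "u < z" by (cases "u = z") auto
    then have "S = {z}"
      using z strict_mono_on_eqD[OF assms(3)] by (fastforce simp: S_def)
    then show ?thesis ..
  qed
  moreover have "S = {}" if "\<not> (g u < c \<and> c \<le> g v)"
  proof -
    have "g u < g z" "g z \<le> g v" if "u < z" "z \<le> v" for z
      using that assms(1) by (auto intro: strict_mono_onD[OF assms(3)] strict_mono_on_leD[OF assms(3)])
    with that show ?thesis by (force simp: S_def)
  qed
  ultimately show "finite S" "card S = (if g u < c \<and> c \<le> g v then 1 else 0)"
    by (cases "g u < c \<and> c \<le> g v"; force)+
qed

lemma card_level_set_Ioi:
  fixes g :: "real \<Rightarrow> real"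
  assumes "continuous_on {u..} g" "strict_mono_on {u..} g" "filterlim g at_top at_top"
  shows "finite {z. u < z \<and> g z = c}"
    and "card {z. u < z \<and> g z = c} = (if g u < c then 1 else 0)"
proof -
  obtain N where N: "\<And>x. N \<le> x \<Longrightarrow> c \<le> g x"
    using assms(3) by (auto simp: filterlim_at_top eventually_at_top_linorder)
  define v where "v = max u N"
  have "c \<le> g v" "u \<le> v" using N by (auto simp: v_def)
  have "g z \<noteq> c" if "v < z" for z
    using strict_mono_onD[OF assms(2), of v z] that \<open>u \<le> v\<close> \<open>c \<le> g v\<close> by auto
  then have eq: "{z. u < z \<and> g z = c} = {z. u < z \<and> z \<le> v \<and> g z = c}"
    by (auto simp: not_le[symmetric])
  have mono: "strict_mono_on {u..v} g" "continuous_on {u..v} g"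
    using assms(1,2) by (auto intro: monotone_on_subset continuous_on_subset)
  show "finite {z. u < z \<and> g z = c}"
    unfolding eq by (rule card_level_set_Ioc(1)[OF \<open>u \<le> v\<close> mono(2,1)])
  show "card {z. u < z \<and> g z = c} = (if g u < c then 1 else 0)"
    unfolding eq card_level_set_Ioc(2)[OF \<open>u \<le> v\<close> mono(2,1)] using \<open>c \<le> g v\<close> by simp
qed

text \<open>The level set is split along the half-open pieces \<open>(u, r\<^sub>1]\<close>, \<open>(r\<^sub>1, r\<^sub>2]\<close>, \<open>(r\<^sub>2, \<infinity>)\<close>;
  this is where the asymmetric inequalities come from.\<close>

lemma card_level_set_up_down_up:
  fixes g :: "real \<Rightarrow> real"
  assumes "u \<le> r1" "r1 \<le> r2" "continuous_on {u..} g"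
    and "strict_mono_on {u..r1} g" "strict_mono_on {r1..r2} (\<lambda>z. - g z)" "strict_mono_on {r2..} g"
    and "filterlim g at_top at_top"
  shows "card {z. u < z \<and> g z = c} =
    (if g u < c \<and> c \<le> g r1 then 1 else 0) + (if g r2 \<le> c \<and> c < g r1 then 1 else 0) +
    (if g r2 < c then 1 else 0)"
proof -
  define A where "A = {z. u < z \<and> z \<le> r1 \<and> g z = c}"
  define B where "B = {z. r1 < z \<and> z \<le> r2 \<and> - g z = - c}"
  define C where "C = {z. r2 < z \<and> g z = c}"
  have "continuous_on {u..r1} g" "continuous_on {r1..r2} (\<lambda>z. - g z)" "continuous_on {r2..} g"
    using assms(1-3) by (auto intro!: continuous_intros intro: continuous_on_subset)
  note A = card_level_set_Ioc[OF assms(1) this(1) assms(4), of c, folded A_def]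
    and B = card_level_set_Ioc[OF assms(2) this(2) assms(5), of "- c", folded B_def]
    and C = card_level_set_Ioi[OF this(3) assms(6,7), of c, folded C_def]
  have "{z. u < z \<and> g z = c} = A \<union> B \<union> C"
    using assms(1,2) by (auto simp: A_def B_def C_def)
  moreover have "A \<inter> B = {}" "(A \<union> B) \<inter> C = {}"
    using assms(2) by (auto simp: A_def B_def C_def)
  ultimately show ?thesis
    using A B C by (simp add: card_Un_disjoint)
qed

section \<open>The quadratic governing the critical points\<close>

definition tisgm_quadratic :: "nat \<Rightarrow> real \<Rightarrow> real \<Rightarrow> real" where
  "tisgm_quadratic k theta x = 2 * x ^ 2 + (4 - (theta - 1) * (real k - 1)) * x + theta + 1"

definition tisgm_discriminant :: "nat \<Rightarrow> real \<Rightarrow> real" where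
  "tisgm_discriminant k theta = (4 - (theta - 1) * (real k - 1)) ^ 2 - 8 * (theta + 1)"

lemma tisgm_quadratic_completed_square:
  "8 * tisgm_quadratic k theta x = (4 * x + (4 - (theta - 1) * (real k - 1))) ^ 2 - tisgm_discriminant k theta"
  by (simp add: tisgm_quadratic_def tisgm_discriminant_def power2_eq_square algebra_simps)

lemma tisgm_discriminant_eq:
  "tisgm_discriminant k theta = (theta - 1) * ((theta - 1) * (real k - 1) ^ 2 - 8 * real k)"
  by (simp add: tisgm_discriminant_def power2_eq_square algebra_simps)

lemma theta_cr_less_iff:
  assumes "k \<ge> 2"
  shows "theta_cr k < theta \<longleftrightarrow> 8 * real k < (theta - 1) * (real k - 1) ^ 2"
proof -
  have K: "0 < (real k - 1) ^ 2" using assms by simp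
  have "theta_cr k < theta \<longleftrightarrow> 2 * (real k + 1) ^ 2 / (real k - 1) ^ 2 < theta + 1"
    by (simp add: theta_cr_def power_divide diff_less_eq)
  also have "\<dots> \<longleftrightarrow> 2 * (real k + 1) ^ 2 < (theta + 1) * (real k - 1) ^ 2"
    using K by (simp add: pos_divide_less_eq)
  also have "\<dots> \<longleftrightarrow> 8 * real k < (theta - 1) * (real k - 1) ^ 2"
    by (simp add: power2_eq_square algebra_simps)
  finally show ?thesis .
qed

lemma tisgm_quadratic_pos_subcritical:
  assumes "k \<ge> 2" "1 < theta" "theta \<le> theta_cr k"
    and "x \<noteq> ((theta - 1) * (real k - 1) - 4) / 4"
  shows "0 < tisgm_quadratic k theta x"
proof -
  have "tisgm_discriminant k theta \<le> 0"
    using assms(2,3) theta_cr_less_iff[OF assms(1), of theta]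
    by (simp add: tisgm_discriminant_eq mult_nonneg_nonpos)
  moreover have "0 < (4 * x + (4 - (theta - 1) * (real k - 1))) ^ 2"
    using assms(4) by (simp add: field_simps)
  ultimately show ?thesis
    using tisgm_quadratic_completed_square[of k theta x] by linarith
qed

lemma tisgm_quadratic_factor_supercritical:
  assumes "k \<ge> 2" "1 < theta" "theta_cr k < theta"
  obtains x1 x2 where "0 < x1" "x1 < x2" "\<And>x. tisgm_quadratic k theta x = 2 * (x - x1) * (x - x2)"
proof
  define b where "b = 4 - (theta - 1) * (real k - 1)"
  define s where "s = sqrt (tisgm_discriminant k theta)"
  have big: "8 * real k < (theta - 1) * (real k - 1) ^ 2"
    using theta_cr_less_iff[OF assms(1)] assms(3) by simp
  then have "0 < tisgm_discriminant k theta"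
    using assms(2) by (simp add: tisgm_discriminant_eq)
  then have s: "0 < s" "s\<^sup>2 = b\<^sup>2 - 8 * (theta + 1)"
    by (simp_all add: s_def tisgm_discriminant_def b_def)
  have "8 * (real k - 1) < (theta - 1) * (real k - 1) * (real k - 1)"
    using big by (simp add: power2_eq_square mult.assoc)
  then have "8 < (theta - 1) * (real k - 1)"
    by (rule mult_right_less_imp_less) (use assms(1) in simp)
  then have "b < 0" by (simp add: b_def)
  moreover have "s\<^sup>2 < (- b)\<^sup>2" using s assms(2) by simp
  ultimately have "s < - b" using power_less_imp_less_base[of s 2 "- b"] by simp
  then show "0 < (- b - s) / 4" "(- b - s) / 4 < (- b + s) / 4" using s(1) by simp_all
  show "tisgm_quadratic k theta x = 2 * (x - (- b - s) / 4) * (x - (- b + s) / 4)" for x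
  proof -
    have "2 * (x - (- b - s) / 4) * (x - (- b + s) / 4) = 2 * x\<^sup>2 + b * x + (b\<^sup>2 - s\<^sup>2) / 8"
      by (simp add: field_simps power2_eq_square)
    then show ?thesis
      unfolding s(2) by (simp add: tisgm_quadratic_def b_def)
  qed
qed

section \<open>Monotonicity of the critical activity\<close>

lemma lam_crit_0 [simp]: "lam_crit k theta 0 = 0"
  by (simp add: lam_crit_def)

lemma has_real_derivative_lam_crit:
  assumes "k \<ge> 1" "0 \<le> x"
  shows "(lam_crit k theta has_real_derivative
    2 ^ k / (1 + theta) ^ (k + 1) * ((1 + theta + 2 * x) / (2 * (1 + x))) ^ (k - 1) / (2 * (1 + x) ^ 2)
      * tisgm_quadratic k theta x) (at x)"
proof -
  define a where "a = 1 + theta"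
  define R where "R = (\<lambda>x. (a + 2 * x) / (2 * (1 + x)))"
  have x1: "1 + x \<noteq> 0" using assms(2) by simp
  have lam: "lam_crit k theta = (\<lambda>x. 2 ^ k / a ^ (k + 1) * (x * R x ^ k))"
    by (auto simp: lam_crit_def a_def R_def)
  have "(R has_real_derivative (2 - a) / (2 * (1 + x) ^ 2)) (at x)"
    unfolding R_def using x1
    by (auto intro!: derivative_eq_intros simp: divide_simps) (simp add: algebra_simps power2_eq_square)
  then have "((\<lambda>x. x * R x ^ k) has_real_derivative
      R x ^ k + x * (real k * R x ^ (k - 1) * ((2 - a) / (2 * (1 + x) ^ 2)))) (at x)"
    by (auto intro!: derivative_eq_intros)
  moreover have "R x ^ k + x * (real k * R x ^ (k - 1) * ((2 - a) / (2 * (1 + x) ^ 2)))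
      = R x ^ (k - 1) / (2 * (1 + x) ^ 2) * tisgm_quadratic k theta x"
  proof -
    have q: "tisgm_quadratic k theta x = 2 * (1 + x) ^ 2 * R x + x * real k * (2 - a)"
      using x1 by (simp add: R_def a_def tisgm_quadratic_def field_simps power2_eq_square)
    have "R x ^ k = R x ^ (k - 1) * R x" using assms(1) by (simp add: power_eq_if)
    then show ?thesis unfolding q using x1 by (simp add: field_simps)
  qed
  ultimately have "((\<lambda>x. x * R x ^ k) has_real_derivative
      R x ^ (k - 1) / (2 * (1 + x) ^ 2) * tisgm_quadratic k theta x) (at x)"
    by simp
  from DERIV_cmult[OF this, of "2 ^ k / a ^ (k + 1)"] show ?thesis
    unfolding lam by (simp add: R_def a_def mult.assoc)
qed

lemma lam_crit_deriv_sgn: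
  assumes "k \<ge> 1" "0 < 1 + theta" "0 \<le> x"
  obtains d where "(lam_crit k theta has_real_derivative d) (at x)"
    and "sgn d = sgn (tisgm_quadratic k theta x)"
proof
  have "0 < 1 + theta + 2 * x" using assms(2,3) by linarith
  then show "sgn (2 ^ k / (1 + theta) ^ (k + 1) * ((1 + theta + 2 * x) / (2 * (1 + x))) ^ (k - 1)
      / (2 * (1 + x) ^ 2) * tisgm_quadratic k theta x) = sgn (tisgm_quadratic k theta x)"
    using assms(2,3) by (simp add: sgn_mult)
qed (rule has_real_derivative_lam_crit[OF assms(1,3)])

lemma continuous_on_lam_crit: "continuous_on {0..} (lam_crit k theta)"
  unfolding lam_crit_def times_divide_eq_left[symmetric] by (intro continuous_intros) auto

lemma lam_crit_at_top:
  assumes "1 \<le> theta"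
  shows "filterlim (lam_crit k theta) at_top at_top"
proof (rule filterlim_at_top_mono)
  have "0 < 2 ^ k / (1 + theta) ^ (k + 1)" using assms by simp
  then show "filterlim (\<lambda>x. 2 ^ k / (1 + theta) ^ (k + 1) * x) at_top at_top"
    by (intro filterlim_tendsto_pos_mult_at_top[OF tendsto_const] filterlim_ident)
  have "2 ^ k / (1 + theta) ^ (k + 1) * x \<le> lam_crit k theta x" if "0 \<le> x" for x
  proof -
    have "1 \<le> (1 + theta + 2 * x) / (2 * (1 + x))" using assms that by simp
    then have "1 \<le> ((1 + theta + 2 * x) / (2 * (1 + x))) ^ k" by (rule one_le_power)
    moreover have "0 \<le> 2 ^ k / (1 + theta) ^ (k + 1) * x" using assms that by simp
    ultimately show ?thesis
      unfolding lam_crit_def times_divide_eq_left[symmetric] by (metis mult_left_mono mult.right_neutral)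
  qed
  then show "\<forall>\<^sub>F x in at_top. 2 ^ k / (1 + theta) ^ (k + 1) * x \<le> lam_crit k theta x"
    by (auto simp: eventually_at_top_linorder)
qed

lemma lam_crit_strict_mono_on_Icc:
  assumes "k \<ge> 1" "0 < 1 + theta" "0 \<le> u"
    and "\<And>x. u < x \<Longrightarrow> x < v \<Longrightarrow> x \<noteq> c \<Longrightarrow> 0 < tisgm_quadratic k theta x"
  shows "strict_mono_on {u..v} (lam_crit k theta)"
proof (rule strict_mono_on_Icc_if_deriv_pos[where c = c])
  show "continuous_on {u..v} (lam_crit k theta)"
    by (rule continuous_on_subset[OF continuous_on_lam_crit]) (use assms(3) in auto)
  show "\<exists>d>0. (lam_crit k theta has_real_derivative d) (at x)" if x: "u < x" "x < v" "x \<noteq> c" for x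
  proof -
    obtain d where "(lam_crit k theta has_real_derivative d) (at x)" "sgn d = sgn (tisgm_quadratic k theta x)"
      by (rule lam_crit_deriv_sgn[OF assms(1,2), of x]) (use assms(3) x in auto)
    with assms(4)[OF x] show ?thesis by (metis sgn_greater)
  qed
qed

lemma lam_crit_strict_mono_on_Ici:
  assumes "k \<ge> 1" "0 < 1 + theta" "0 \<le> u"
    and "\<And>x. u < x \<Longrightarrow> x \<noteq> c \<Longrightarrow> 0 < tisgm_quadratic k theta x"
  shows "strict_mono_on {u..} (lam_crit k theta)"
proof (rule strict_mono_on_Ici_if_deriv_pos[where c = c])
  show "continuous_on {u..} (lam_crit k theta)"
    by (rule continuous_on_subset[OF continuous_on_lam_crit]) (use assms(3) in auto)
  show "\<exists>d>0. (lam_crit k theta has_real_derivative d) (at x)" if x: "u < x" "x \<noteq> c" for x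
  proof -
    obtain d where "(lam_crit k theta has_real_derivative d) (at x)" "sgn d = sgn (tisgm_quadratic k theta x)"
      by (rule lam_crit_deriv_sgn[OF assms(1,2), of x]) (use assms(3) x in auto)
    with assms(4)[OF x] show ?thesis by (metis sgn_greater)
  qed
qed

lemma lam_crit_strict_antimono_on_Icc:
  assumes "k \<ge> 1" "0 < 1 + theta" "0 \<le> u"
    and "\<And>x. u < x \<Longrightarrow> x < v \<Longrightarrow> tisgm_quadratic k theta x < 0"
  shows "strict_mono_on {u..v} (\<lambda>x. - lam_crit k theta x)"
proof (rule strict_mono_on_Icc_if_deriv_pos[where c = u])
  show "continuous_on {u..v} (\<lambda>x. - lam_crit k theta x)"
    by (intro continuous_on_minus continuous_on_subset[OF continuous_on_lam_crit]) (use assms(3) in auto)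
  show "\<exists>d>0. ((\<lambda>x. - lam_crit k theta x) has_real_derivative d) (at x)" if x: "u < x" "x < v" for x
  proof -
    obtain d where "(lam_crit k theta has_real_derivative d) (at x)" "sgn d = sgn (tisgm_quadratic k theta x)"
      by (rule lam_crit_deriv_sgn[OF assms(1,2), of x]) (use assms(3) x in auto)
    with assms(4)[OF x] show ?thesis by (metis DERIV_minus neg_0_less_iff_less sgn_less)
  qed
qed

section \<open>Counting the solutions\<close>

lemma lam_crit_diagonal:
  assumes "0 < 1 + theta" "0 \<le> z"
  shows "lam_crit k theta ((1 + theta) * z) = z * ((1 + 2 * z) / (1 + (1 + theta) * z)) ^ k"
proof -
  define a where "a = 1 + theta"
  define T where "T = (1 + 2 * z) / (1 + a * z)"
  have "0 < a" "0 < 1 + a * z" using assms by (simp_all add: a_def add_pos_nonneg)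
  then have T: "(a + 2 * (a * z)) / (2 * (1 + a * z)) = a / 2 * T"
    by (simp add: T_def field_simps)
  have "lam_crit k theta (a * z) = 2 ^ k * (a * z) / a ^ (k + 1) * (a / 2 * T) ^ k"
    unfolding lam_crit_def a_def[symmetric] T ..
  also have "\<dots> = z * T ^ k"
    using \<open>0 < a\<close> by (simp add: power_mult_distrib power_divide)
  finally show ?thesis by (simp add: a_def T_def)
qed

lemma scwr_tisgm_swap: "(x, y) \<in> scwr_tisgm k lam theta \<longleftrightarrow> (y, x) \<in> scwr_tisgm k lam theta"
  by (auto simp: scwr_tisgm_def ac_simps)

lemma scwr_tisgm_not_less:
  assumes "k \<ge> 1" "1 < theta" "0 < lam" "(x, y) \<in> scwr_tisgm k lam theta"
  shows "\<not> x < y"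
proof
  assume "x < y"
  have x: "x = lam * ((1 + x + theta * y) / (1 + x + y)) ^ k"
    and y: "y = lam * ((1 + theta * x + y) / (1 + x + y)) ^ k"
    and pos: "0 < x" "0 < y"
    using assms(4) by (auto simp: scwr_tisgm_def)
  have "0 < (theta - 1) * (y - x)" using \<open>x < y\<close> assms(2) by simp
  then have "1 + theta * x + y < 1 + x + theta * y" by (simp add: algebra_simps)
  then have "(1 + theta * x + y) / (1 + x + y) < (1 + x + theta * y) / (1 + x + y)"
    using pos by (intro divide_strict_right_mono) auto
  then have "((1 + theta * x + y) / (1 + x + y)) ^ k < ((1 + x + theta * y) / (1 + x + y)) ^ k"
    using assms(1,2) pos by (intro power_strict_mono) auto
  then have "y < x" using x y assms(3) by (metis mult_strict_left_mono)
  with \<open>x < y\<close> show False by simp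
qed

lemma scwr_tisgm_diagonal:
  assumes "k \<ge> 1" "1 < theta" "0 < lam" "(x, y) \<in> scwr_tisgm k lam theta"
  shows "x = y"
  using scwr_tisgm_not_less[OF assms(1-3)] assms(4) scwr_tisgm_swap by (metis linorder_neqE)

lemma scwr_tisgm_diagonal_iff:
  assumes "0 < 1 + theta"
  shows "(z, z) \<in> scwr_tisgm k lam theta \<longleftrightarrow> 0 < z \<and> lam_crit k theta ((1 + theta) * z) = lam"
proof (cases "0 < z")
  case True
  define F where "F = (1 + (1 + theta) * z) / (1 + 2 * z)"
  have "0 < F" using assms True by (simp add: F_def add_pos_pos)
  have "(z, z) \<in> scwr_tisgm k lam theta \<longleftrightarrow> z = lam * F ^ k"
    using True by (simp add: scwr_tisgm_def F_def algebra_simps)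
  also have "\<dots> \<longleftrightarrow> z * inverse F ^ k = lam"
    using \<open>0 < F\<close> by (auto simp: power_inverse divide_simps)
  also have "z * inverse F ^ k = lam_crit k theta ((1 + theta) * z)"
    using assms True by (simp add: lam_crit_diagonal F_def)
  finally show ?thesis using True by simp
qed (simp add: scwr_tisgm_def)

lemma scwr_tisgm_eq_image:
  assumes "k \<ge> 1" "1 < theta" "0 < lam"
  shows "scwr_tisgm k lam theta =
    (\<lambda>x. (x / (1 + theta), x / (1 + theta))) ` {x. 0 < x \<and> lam_crit k theta x = lam}"
proof (intro equalityI subsetI)
  fix p assume p: "p \<in> scwr_tisgm k lam theta"
  then obtain z where "p = (z, z)"
    using scwr_tisgm_diagonal[OF assms] by (metis prod.collapse)
  with p assms(2) show "p \<in> (\<lambda>x. (x / (1 + theta), x / (1 + theta))) ` {x. 0 < x \<and> lam_crit k theta x = lam}"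
    by (auto simp: scwr_tisgm_diagonal_iff intro!: image_eqI[of _ _ "(1 + theta) * z"])
next
  fix p assume "p \<in> (\<lambda>x. (x / (1 + theta), x / (1 + theta))) ` {x. 0 < x \<and> lam_crit k theta x = lam}"
  with assms(2) show "p \<in> scwr_tisgm k lam theta"
    by (auto simp: scwr_tisgm_diagonal_iff)
qed

lemma num_tisgm_eq_card_lam_crit:
  assumes "k \<ge> 1" "1 < theta" "0 < lam"
  shows "num_tisgm k lam theta = card {x. 0 < x \<and> lam_crit k theta x = lam}"
  unfolding num_tisgm_def scwr_tisgm_eq_image[OF assms]
  using assms(2) by (intro card_image) (auto simp: inj_on_def)

lemma num_tisgm_subcritical:
  assumes "k \<ge> 2" "0 < lam" "1 < theta" "theta \<le> theta_cr k"
  shows "num_tisgm k lam theta = 1"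
proof -
  have "strict_mono_on {0..} (lam_crit k theta)"
    using assms(1,3) tisgm_quadratic_pos_subcritical[OF assms(1,3,4)]
    by (intro lam_crit_strict_mono_on_Ici[where c = "((theta - 1) * (real k - 1) - 4) / 4"]) auto
  then have "card {x. 0 < x \<and> lam_crit k theta x = lam} = 1"
    using card_level_set_Ioi(2)[OF continuous_on_lam_crit _ lam_crit_at_top] assms(2,3) by simp
  then show ?thesis
    using assms by (simp add: num_tisgm_eq_card_lam_crit)
qed

lemma num_tisgm_supercritical:
  assumes "k \<ge> 1" "0 < lam" "1 < theta" "0 < x1" "x1 < x2"
    and "\<And>x. tisgm_quadratic k theta x = 2 * (x - x1) * (x - x2)"
  shows "lam_crit k theta x2 < lam_crit k theta x1"
    and "num_tisgm k lam theta =
      (if lam \<le> lam_crit k theta x1 then 1 else 0) +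
      (if lam_crit k theta x2 \<le> lam \<and> lam < lam_crit k theta x1 then 1 else 0) +
      (if lam_crit k theta x2 < lam then 1 else 0)"
proof -
  have th: "0 < 1 + theta" using assms(3) by simp
  have pos: "0 < tisgm_quadratic k theta x" if "x < x1 \<or> x2 < x" for x
    using that assms(5) by (auto simp: assms(6) intro: mult_pos_pos mult_neg_neg)
  have neg: "tisgm_quadratic k theta x < 0" if "x1 < x" "x < x2" for x
    using that by (simp add: assms(6) mult_pos_neg)
  have up1: "strict_mono_on {0..x1} (lam_crit k theta)"
    using pos by (intro lam_crit_strict_mono_on_Icc[OF assms(1) th, where c = x1]) auto
  have down: "strict_mono_on {x1..x2} (\<lambda>x. - lam_crit k theta x)"
    using neg assms(4) by (intro lam_crit_strict_antimono_on_Icc[OF assms(1) th]) auto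
  have up2: "strict_mono_on {x2..} (lam_crit k theta)"
    using pos assms(4,5) by (intro lam_crit_strict_mono_on_Ici[OF assms(1) th, where c = x2]) auto
  show "lam_crit k theta x2 < lam_crit k theta x1"
    using strict_mono_onD[OF down, of x1 x2] assms(5) by simp
  show "num_tisgm k lam theta =
      (if lam \<le> lam_crit k theta x1 then 1 else 0) +
      (if lam_crit k theta x2 \<le> lam \<and> lam < lam_crit k theta x1 then 1 else 0) +
      (if lam_crit k theta x2 < lam then 1 else 0)"
    using card_level_set_up_down_up[OF _ _ continuous_on_lam_crit up1 down up2 lam_crit_at_top, of lam]
      assms by (simp add: num_tisgm_eq_card_lam_crit)
qed

theorem mainTheorem4:
  fixes k :: nat and lam theta :: real
  assumes "k \<ge> 2" and "lam > 0" and "theta > 1"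
  shows "(theta \<le> theta_cr k \<longrightarrow> num_tisgm k lam theta = 1) \<and>
    (theta > theta_cr k \<longrightarrow>
      (\<exists>x1 x2. x1 > 0 \<and> x2 > 0 \<and> x1 \<noteq> x2 \<and>
         {x. 2 * x ^ 2 + (4 - (theta - 1) * (real k - 1)) * x + theta + 1 = 0} = {x1, x2} \<and>
         lam_crit k theta x1 \<noteq> lam_crit k theta x2 \<and>
         (let lm = min (lam_crit k theta x1) (lam_crit k theta x2);
              lp = max (lam_crit k theta x1) (lam_crit k theta x2)
          in ((lam < lm \<or> lam > lp) \<longrightarrow> num_tisgm k lam theta = 1) \<and>
             ((lam = lm \<or> lam = lp) \<longrightarrow> num_tisgm k lam theta = 2) \<and>
             ((lm < lam \<and> lam < lp) \<longrightarrow> num_tisgm k lam theta = 3))))"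
proof (intro conjI impI, goal_cases)
  case 1
  then show ?case using num_tisgm_subcritical assms by blast
next
  case 2
  then obtain x1 x2 where roots: "0 < x1" "x1 < x2"
    and factor: "\<And>x. tisgm_quadratic k theta x = 2 * (x - x1) * (x - x2)"
    using tisgm_quadratic_factor_supercritical assms(1,3) by blast
  have "{x. 2 * x ^ 2 + (4 - (theta - 1) * (real k - 1)) * x + theta + 1 = 0} = {x1, x2}"
    using factor by (auto simp: tisgm_quadratic_def[symmetric])
  moreover note num_tisgm_supercritical[OF _ assms(2,3) roots factor]
  ultimately show ?case using roots assms(1)
    by (intro exI[of _ x1] exI[of _ x2]) (auto simp: Let_def min_def max_def)
qed

end
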